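(* Fix a mesh and let $D\in\mathbb R^{N\times N}$ be skew-symmetric ($D=-D^T$). Let $U_1,\dots,U_N\ge0$ be fixed and suppose there are indices $i\neq j$ with $U_i=0$, $U_j>0$ and $D_{ij}\neq0$. For $\varepsilon>0$ set $\mathbf u^\varepsilon=(U_k+\varepsilon)_{k=1}^N$. Let $J(\mathbf u)$ be the Jacobian of the flux-differencing residual $\mathcal R_i(\mathbf u)=-2\sum_jD_{ij}F^\star(u_i,u_j)$ with either the logarithmic flux or the geometric flux (coefficient $a\equiv1$), and $J_{\mathrm{sym}}=\tfrac12(J+J^T)$. Then $$\lambda_{\max}\big(J_{\mathrm{sym}}(\mathbf u^\varepsilon)\big)\to\infty\qquad\text{as }\varepsilon\to0^+ .$$
   Context: Logarithmic flux $F^\star(u,v)=(v-u)/(\log v-\log u)$ (value $u$ if $u=v$); geometric flux $F^\star(u,v)=\sqrt{uv}$. The Jacobian is $J_{ik}=-2D_{ik}\partial_2F^\star(u_i,u_k)-2\delta_{ik}\sum_jD_{ij}\partial_1F^\star(u_i,u_j)$. Explicitly, for the logarithmic flux, $(J_{\mathrm{sym}})_{ij}=-D_{ij}\frac{2\log(u_j/u_i)+u_i/u_j-u_j/u_i}{\log^2(u_j/u_i)}$ for $i\ne j$ and $(J_{\mathrm{sym}})_{ii}=-2\sum_{k\ne i}D_{ik}\frac{u_k/u_i-\log(u_k/u_i)-1}{\log^2(u_k/u_i)}$; for the geometric flux, $(J_{\mathrm{sym}})_{ij}=\tfrac12D_{ij}\frac{u_j-u_i}{\sqrt{u_iu_j}}$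 for $i\ne j$ and $(J_{\mathrm{sym}})_{ii}=-\sum_{k\ne i}D_{ik}\sqrt{u_k/u_i}$ (terms with $u_k=u_i$ interpreted by continuity). $\lambda_{\max}$ denotes the largest eigenvalue of a symmetric matrix. *)

theory Defs
  imports Complex_Main "Jordan_Normal_Form.Char_Poly"
begin

definition log_flux :: "real \<Rightarrow> real \<Rightarrow> real" where
  "log_flux u v = (if u = v then u else (v - u) / (ln v - ln u))"

definition geo_flux :: "real \<Rightarrow> real \<Rightarrow> real" where
  "geo_flux u v = sqrt (u * v)"

definition residual :: "(real \<Rightarrow> real \<Rightarrow> real) \<Rightarrow> nat \<Rightarrow> real mat \<Rightarrow> (nat \<Rightarrow> real) \<Rightarrow> nat \<Rightarrow> real" where
  "residual F N D u i = -2 * (\<Sum>j<N. D $$ (i, j) * F (u i) (u j))"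

text \<open>Jacobian entry J_ik(u) = partial derivative of R_i with respect to u_k
  (same as the library deriv, which unfolds to this SOME-term).\<close>
definition jac :: "(real \<Rightarrow> real \<Rightarrow> real) \<Rightarrow> nat \<Rightarrow> real mat \<Rightarrow> (nat \<Rightarrow> real) \<Rightarrow> nat \<Rightarrow> nat \<Rightarrow> real" where
  "jac F N D u i k = (SOME d. ((\<lambda>t. residual F N D (u(k := t)) i) has_real_derivative d) (at (u k)))"

definition jac_sym :: "(real \<Rightarrow> real \<Rightarrow> real) \<Rightarrow> nat \<Rightarrow> real mat \<Rightarrow> (nat \<Rightarrow> real) \<Rightarrow> real mat" where
  "jac_sym F N D u = mat N N (\<lambda>(i, k). (jac F N D u i k + jac F N D u k i) / 2)"

definition lambda_max :: "real mat \<Rightarrow> real" where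
  "lambda_max A = Max {k. eigenvalue A k}"

end

theory Submission
  imports Defs "HOL-Analysis.Analysis" "HOL-Real_Asymp.Real_Asymp"
begin

text \<open>The largest eigenvalue of a symmetric matrix dominates every Rayleigh quotient, because the
  maximum of the quadratic form on the unit sphere is an eigenvalue. Test the symmetric Jacobian at
  \<open>U + \<epsilon>\<close> with \<open>x = s e\<^sub>i + e\<^sub>j\<close>. With \<open>\<partial>\<^sub>1F\<close> the slope of the flux in its first argument,
  the diagonal entry at the vanishing state \<open>i\<close> is only \<open>-O(w \<epsilon>)\<close>, where \<open>w \<epsilon>\<close> bounds
  \<open>\<partial>\<^sub>1F(\<epsilon>, \<cdot>)\<close>, the entry at the positive state \<open>j\<close> stays bounded, and the off-diagonal entry is
  \<open>c = D\<^sub>i\<^sub>j (\<partial>\<^sub>1F(\<epsilon>, U\<^sub>j + \<epsilon>) - \<partial>\<^sub>1F(U\<^sub>j + \<epsilon>, \<epsilon>))\<close>. Taking \<open>s\<close> proportional to \<open>c / w \<epsilon>\<close>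
  gives \<open>\<lambda>\<^sub>m\<^sub>a\<^sub>x \<ge> const \<cdot> c\<^sup>2 / w \<epsilon> - const\<close>, and \<open>c\<^sup>2 / w \<epsilon> \<rightarrow> \<infinity>\<close>: for the logarithmic flux
  \<open>w \<epsilon> = 1 / \<epsilon>\<close> and \<open>c \<sim> const / (\<epsilon> ln\<^sup>2 \<epsilon>)\<close>, for the geometric flux \<open>w \<epsilon> = 1 / \<surd>\<epsilon>\<close> and
  \<open>c \<sim> const / \<surd>\<epsilon>\<close>.\<close>

section \<open>Rayleigh quotients of symmetric matrices\<close>

definition bilin_form :: "real mat \<Rightarrow> nat \<Rightarrow> (nat \<Rightarrow> real) \<Rightarrow> (nat \<Rightarrow> real) \<Rightarrow> real" where
  "bilin_form A n x y = (\<Sum>a<n. \<Sum>b<n. A $$ (a, b) * x a * y b)"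

definition sum_sq :: "nat \<Rightarrow> (nat \<Rightarrow> real) \<Rightarrow> real" where
  "sum_sq n x = (\<Sum>k<n. (x k)\<^sup>2)"

lemma sum_sq_nonneg: "0 \<le> sum_sq n x"
  unfolding sum_sq_def by (simp add: sum_nonneg)

lemma sq_le_sum_sq: "k < n \<Longrightarrow> (x k)\<^sup>2 \<le> sum_sq n x"
  unfolding sum_sq_def by (rule member_le_sum) auto

lemma sum_sq_eq_0_imp_0: "sum_sq n x = 0 \<Longrightarrow> k < n \<Longrightarrow> x k = 0"
  using sq_le_sum_sq[of k n x] by simp

lemma sum_sq_scale: "sum_sq n (\<lambda>k. t * x k) = t\<^sup>2 * sum_sq n x"
  unfolding sum_sq_def by (simp add: sum_distrib_left power_mult_distrib)

lemma bilin_form_scale: "bilin_form A n (\<lambda>k. t * x k) (\<lambda>k. t * x k) = t\<^sup>2 * bilin_form A n x x"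
  unfolding bilin_form_def power2_eq_square by (simp add: sum_distrib_left algebra_simps)

lemma sum_sq_add_scaled:
  "sum_sq n (\<lambda>k. x k + t * y k) = sum_sq n x + 2 * t * (\<Sum>k<n. x k * y k) + t\<^sup>2 * sum_sq n y"
  unfolding sum_sq_def power2_eq_square by (simp add: sum_distrib_left sum.distrib algebra_simps)

lemma bilin_form_add_scaled:
  "bilin_form A n (\<lambda>k. x k + t * y k) (\<lambda>k. x k + t * y k)
     = bilin_form A n x x + t * (bilin_form A n x y + bilin_form A n y x) + t\<^sup>2 * bilin_form A n y y"
  unfolding bilin_form_def power2_eq_square by (simp add: sum_distrib_left sum.distrib algebra_simps)

lemma bilin_form_commute:
  assumes "\<forall>a<n. \<forall>b<n. A $$ (a, b) = A $$ (b, a)"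
  shows "bilin_form A n x y = bilin_form A n y x"
  unfolding bilin_form_def using assms
  by (subst sum.swap) (auto intro!: sum.cong simp: mult.commute mult.left_commute)

lemma compactin_unit_sphere:
  "compactin (product_topology (\<lambda>_. euclideanreal) {..<n})
     {x \<in> topspace (product_topology (\<lambda>_. euclideanreal) {..<n}). sum_sq n x = 1}"
  (is "compactin ?X ?S")
proof (rule closed_compactin)
  show "compactin ?X (PiE {..<n} (\<lambda>_. {-1..1}))"
    by (subst compactin_PiE) auto
  show "?S \<subseteq> PiE {..<n} (\<lambda>_. {-1..1})"
  proof
    fix x assume "x \<in> ?S"
    then have "x k \<in> {-1..1}" if "k < n" for k
      using sq_le_sum_sq[OF that, of x] abs_le_square_iff[of "x k" 1] by (auto simp: abs_le_iff)
    with \<open>x \<in> ?S\<close> show "x \<in> PiE {..<n} (\<lambda>_. {-1..1})"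
      by auto
  qed
  have "continuous_map ?X euclideanreal (sum_sq n)"
    unfolding sum_sq_def power2_eq_square
    by (intro continuous_map_sum continuous_map_real_mult continuous_map_product_projection) auto
  then show "closedin ?X ?S"
    using closedin_continuous_map_preimage[of ?X euclideanreal _ "{1}"] by auto
qed

lemma bilin_form_attains_max_on_sphere:
  assumes "0 < n"
  obtains v where "sum_sq n v = 1" "\<And>x. sum_sq n x = 1 \<Longrightarrow> bilin_form A n x x \<le> bilin_form A n v v"
proof -
  define X where "X = product_topology (\<lambda>_. euclideanreal) {..<n}"
  define S where "S = {x \<in> topspace X. sum_sq n x = 1}"
  have "continuous_map X euclideanreal (\<lambda>x. bilin_form A n x x)"
    unfolding bilin_form_def X_def
    by (intro continuous_map_sum continuous_map_real_mult continuous_map_const[THEN iffD2]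
        continuous_map_product_projection) auto
  then have "compact ((\<lambda>x. bilin_form A n x x) ` S)"
    using image_compactin compactin_unit_sphere compactin_euclidean_iff unfolding S_def X_def by blast
  moreover have "restrict (\<lambda>k. if k = 0 then 1 else 0) {..<n} \<in> S"
    using assms by (simp add: S_def X_def sum_sq_def if_distrib[of "\<lambda>x. x\<^sup>2"] cong: if_cong)
  ultimately obtain v where v: "v \<in> S" "\<And>y. y \<in> S \<Longrightarrow> bilin_form A n y y \<le> bilin_form A n v v"
    using compact_attains_sup[of "(\<lambda>x. bilin_form A n x x) ` S"] by blast
  show ?thesis
  proof (rule that)
    show "sum_sq n v = 1"
      using v(1) unfolding S_def by simp
    fix x assume "sum_sq n x = 1"
    moreover have "sum_sq n (restrict x {..<n}) = sum_sq n x"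
      and "bilin_form A n (restrict x {..<n}) (restrict x {..<n}) = bilin_form A n x x"
      unfolding sum_sq_def bilin_form_def by auto
    ultimately show "bilin_form A n x x \<le> bilin_form A n v v"
      using v(2)[of "restrict x {..<n}"] unfolding S_def X_def by auto
  qed
qed

lemma bilin_form_le_by_sphere_bound:
  assumes "\<And>x. sum_sq n x = 1 \<Longrightarrow> bilin_form A n x x \<le> M"
  shows "bilin_form A n y y \<le> M * sum_sq n y"
proof (cases "sum_sq n y = 0")
  case True
  then show ?thesis
    using sum_sq_eq_0_imp_0[OF True] by (simp add: bilin_form_def)
next
  case False
  then have pos: "0 < sum_sq n y"
    using sum_sq_nonneg[of n y] by simp
  define t where "t = 1 / sqrt (sum_sq n y)"
  have "t\<^sup>2 * sum_sq n y = 1"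
    using pos by (simp add: t_def power_divide)
  then have "t\<^sup>2 * bilin_form A n y y \<le> M"
    using assms[of "\<lambda>k. t * y k"] by (simp add: sum_sq_scale bilin_form_scale)
  then show ?thesis
    using pos by (simp add: t_def power_divide divide_le_eq mult.commute)
qed

lemma quadratic_nonpos_imp_linear_coeff_0:
  fixes R C :: real
  assumes "\<And>t. 2 * t * R + t\<^sup>2 * C \<le> 0"
  shows "R = 0"
proof (rule ccontr)
  assume "R \<noteq> 0"
  define c where "c = \<bar>C\<bar> + 1"
  define t where "t = R / c"
  have c: "0 < c" "\<bar>C\<bar> < c" by (auto simp: c_def)
  have "0 < t\<^sup>2"
    using c \<open>R \<noteq> 0\<close> by (simp add: t_def)
  then have "- (t\<^sup>2 * c) < t\<^sup>2 * C"
    using c mult_strict_left_mono[of "- c" C "t\<^sup>2"] by simp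
  also have "t\<^sup>2 * c = t * R"
    using c by (simp add: t_def power2_eq_square)
  finally have "- (t * R) < t\<^sup>2 * C" .
  moreover have "0 < t * R"
    using c \<open>R \<noteq> 0\<close> by (simp add: t_def) (metis divide_pos_pos not_real_square_gt_zero)
  ultimately show False
    using assms[of t] by simp
qed

lemma eigenvalueI_fun:
  assumes A: "A \<in> carrier_mat n n" and v: "sum_sq n v \<noteq> 0"
    and eq: "\<And>a. a < n \<Longrightarrow> (\<Sum>b<n. A $$ (a, b) * v b) = M * v a"
  shows "eigenvalue A M"
  unfolding eigenvalue_def eigenvector_def
proof (intro exI conjI)
  let ?w = "Matrix.vec n v"
  show "?w \<in> carrier_vec (dim_row A)"
    using A by simp
  show "?w \<noteq> 0\<^sub>v (dim_row A)"
  proof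
    assume "?w = 0\<^sub>v (dim_row A)"
    then have "v k = 0" if "k < n" for k
      using that A by (metis carrier_matD(1) index_vec index_zero_vec(1))
    then show False
      using v by (simp add: sum_sq_def)
  qed
  show "A *\<^sub>v ?w = M \<cdot>\<^sub>v ?w"
  proof (rule eq_vecI)
    fix a assume "a < dim_vec (M \<cdot>\<^sub>v ?w)"
    then have "a < n" by simp
    then show "vec_index (A *\<^sub>v ?w) a = vec_index (M \<cdot>\<^sub>v ?w) a"
      using A eq[of a] by (auto simp: scalar_prod_def lessThan_atLeast0 intro!: sum.cong)
  qed (use A in simp)
qed

lemma max_of_bilin_form_is_eigenvalue:
  assumes A: "A \<in> carrier_mat n n" and sym: "\<forall>a<n. \<forall>b<n. A $$ (a, b) = A $$ (b, a)"
    and v: "sum_sq n v = 1"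
    and max: "\<And>x. bilin_form A n x x \<le> bilin_form A n v v * sum_sq n x"
  shows "eigenvalue A (bilin_form A n v v)"
proof -
  define M where "M = bilin_form A n v v"
  \<comment> \<open>Perturbing \<open>v\<close> along the residual \<open>r = A v - M v\<close>, maximality forces \<open>|r|\<^sup>2 = 0\<close>.\<close>
  define r where "r a = (\<Sum>b<n. A $$ (a, b) * v b) - M * v a" for a
  have "bilin_form A n v r = (\<Sum>b<n. r b * (\<Sum>a<n. A $$ (b, a) * v a))"
    unfolding bilin_form_def using sym
    by (subst sum.swap) (auto intro!: sum.cong simp: sum_distrib_left mult_ac)
  also have "\<dots> = (\<Sum>b<n. r b * (r b + M * v b))"
    by (simp add: r_def)
  also have "\<dots> = sum_sq n r + M * (\<Sum>k<n. v k * r k)"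
    unfolding sum_sq_def power2_eq_square by (simp add: algebra_simps sum.distrib sum_distrib_left)
  finally have vr: "bilin_form A n v r = sum_sq n r + M * (\<Sum>k<n. v k * r k)" .
  have "2 * t * sum_sq n r + t\<^sup>2 * (bilin_form A n r r - M * sum_sq n r) \<le> 0" for t
    using max[of "\<lambda>k. v k + t * r k"]
    unfolding bilin_form_add_scaled sum_sq_add_scaled bilin_form_commute[OF sym, of r v] vr
      M_def[symmetric] v
    by (simp add: algebra_simps)
  then have "sum_sq n r = 0"
    by (rule quadratic_nonpos_imp_linear_coeff_0)
  then have "r a = 0" if "a < n" for a
    using sum_sq_eq_0_imp_0 that by blast
  then show ?thesis
    unfolding M_def[symmetric] by (intro eigenvalueI_fun[OF A, of v]) (auto simp: v r_def)
qed

lemma eigenvalue_bounds_bilin_form: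
  assumes A: "A \<in> carrier_mat n n" and sym: "\<forall>a<n. \<forall>b<n. A $$ (a, b) = A $$ (b, a)"
    and "0 < n"
  obtains l where "eigenvalue A l" "\<And>x. bilin_form A n x x \<le> l * sum_sq n x"
proof -
  obtain v where v: "sum_sq n v = 1"
    and max: "\<And>x. sum_sq n x = 1 \<Longrightarrow> bilin_form A n x x \<le> bilin_form A n v v"
    using bilin_form_attains_max_on_sphere[OF \<open>0 < n\<close>] by blast
  have "\<And>x. bilin_form A n x x \<le> bilin_form A n v v * sum_sq n x"
    using max by (rule bilin_form_le_by_sphere_bound)
  with max_of_bilin_form_is_eigenvalue[OF A sym v] show ?thesis
    using that by blast
qed

lemma finite_eigenvalues:
  fixes A :: "'a :: field mat"
  assumes "A \<in> carrier_mat n n"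
  shows "finite {k. eigenvalue A k}"
proof -
  have "char_poly A \<noteq> 0"
    using degree_monic_char_poly[OF assms] by auto
  then show ?thesis
    using poly_roots_finite[of "char_poly A"] eigenvalue_root_char_poly[OF assms] by simp
qed

lemma bilin_form_le_lambda_max:
  assumes A: "A \<in> carrier_mat n n" and sym: "\<forall>a<n. \<forall>b<n. A $$ (a, b) = A $$ (b, a)"
    and "0 < n"
  shows "bilin_form A n x x \<le> lambda_max A * sum_sq n x"
proof -
  obtain l where l: "eigenvalue A l" "bilin_form A n x x \<le> l * sum_sq n x"
    using eigenvalue_bounds_bilin_form[OF A sym \<open>0 < n\<close>] by blast
  have "l \<le> lambda_max A"
    unfolding lambda_max_def using finite_eigenvalues[OF A] l(1) by simp
  then show ?thesis
    using l(2) sum_sq_nonneg[of n x] by (meson mult_right_mono order_trans)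
qed

lemma sum_supported_on_pair:
  fixes n :: nat
  assumes "i < n" "j < n" "i \<noteq> j" "\<And>k. k \<noteq> i \<Longrightarrow> k \<noteq> j \<Longrightarrow> f k = 0"
  shows "(\<Sum>k<n. f k) = f i + f j"
proof -
  have "(\<Sum>k<n. f k) = (\<Sum>k\<in>{i, j}. f k)"
    using assms by (intro sum.mono_neutral_right) auto
  then show ?thesis
    using assms(3) by simp
qed

lemma bilin_form_pair_vector:
  assumes sym: "\<forall>a<n. \<forall>b<n. A $$ (a, b) = A $$ (b, a)" and ij: "i < n" "j < n" "i \<noteq> j"
    and x: "x = (\<lambda>k. if k = i then s else if k = j then 1 else 0)"
  shows "bilin_form A n x x = s\<^sup>2 * A $$ (i, i) + 2 * s * A $$ (i, j) + A $$ (j, j)"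
proof -
  have pair: "(\<Sum>k<n. f k * x k) = f i * s + f j" for f
    using sum_supported_on_pair[OF ij, of "\<lambda>k. f k * x k"] ij(3) by (simp add: x)
  have "bilin_form A n x x = (\<Sum>a<n. (\<Sum>b<n. A $$ (a, b) * x b) * x a)"
    unfolding bilin_form_def by (simp add: sum_distrib_left sum_distrib_right mult_ac)
  also have "\<dots> = (\<Sum>a<n. (A $$ (a, i) * s + A $$ (a, j)) * x a)"
    by (simp only: pair)
  also have "\<dots> = (A $$ (i, i) * s + A $$ (i, j)) * s + (A $$ (j, i) * s + A $$ (j, j))"
    by (rule pair)
  finally show ?thesis
    using sym ij by (simp add: power2_eq_square algebra_simps)
qed

lemma sum_sq_pair_vector:
  assumes "i < n" "j < n" "i \<noteq> j"
  shows "sum_sq n (\<lambda>k. if k = i then s else if k = j then 1 else 0) = s\<^sup>2 + 1"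
  using sum_supported_on_pair[OF assms, of "\<lambda>k. (if k = i then s else if k = j then 1 else 0)\<^sup>2"]
    assms(3) by (simp add: sum_sq_def)

lemma lambda_max_ge_pair_bound:
  fixes \<alpha> \<beta> K :: real
  assumes A: "A \<in> carrier_mat n n" and sym: "\<forall>a<n. \<forall>b<n. A $$ (a, b) = A $$ (b, a)"
    and ij: "i < n" "j < n" "i \<noteq> j"
    and "0 < \<alpha>" and ii: "- \<alpha> \<le> A $$ (i, i)" and jj: "- \<beta> \<le> A $$ (j, j)"
    and ij_le: "\<bar>A $$ (i, j)\<bar> \<le> K * \<alpha>"
  shows "(A $$ (i, j))\<^sup>2 / \<alpha> - \<beta> \<le> (1 + K\<^sup>2) * max 0 (lambda_max A)"
proof -
  define c where "c = A $$ (i, j)"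
  define s where "s = c / \<alpha>"
  define x where "x = (\<lambda>k. if k = i then s else if k = j then 1 else (0 :: real))"
  have "s\<^sup>2 * (- \<alpha>) \<le> s\<^sup>2 * A $$ (i, i)"
    using mult_left_mono[OF ii, of "s\<^sup>2"] by simp
  moreover have "s\<^sup>2 * \<alpha> = c\<^sup>2 / \<alpha>" "s * c = c\<^sup>2 / \<alpha>"
    using \<open>0 < \<alpha>\<close> by (simp_all add: s_def power2_eq_square)
  ultimately have "c\<^sup>2 / \<alpha> - \<beta> \<le> bilin_form A n x x"
    using jj bilin_form_pair_vector[OF sym ij x_def] by (simp add: c_def)
  also have "\<dots> \<le> max 0 (lambda_max A) * sum_sq n x"
    using bilin_form_le_lambda_max[OF A sym, of x] ij(1)
    by (simp add: mult_right_mono sum_sq_nonneg order_trans)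
  also have "\<dots> \<le> (1 + K\<^sup>2) * max 0 (lambda_max A)"
  proof -
    have "\<bar>s\<bar> \<le> K"
      using ij_le \<open>0 < \<alpha>\<close> by (simp add: s_def c_def abs_div pos_divide_le_eq)
    then have "sum_sq n x \<le> 1 + K\<^sup>2"
      using power_mono[of "\<bar>s\<bar>" K 2] sum_sq_pair_vector[OF ij] by (simp add: x_def)
    then show ?thesis
      using mult_right_mono[of "sum_sq n x" "1 + K\<^sup>2" "max 0 (lambda_max A)"] by (simp add: mult.commute)
  qed
  finally show ?thesis
    by (simp add: c_def)
qed

section \<open>The Jacobian of the flux-differencing residual\<close>

lemma jac_eqI:
  "((\<lambda>t. residual F N D (u(k := t)) i) has_real_derivative d) (at (u k)) \<Longrightarrow> jac F N D u i k = d"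
  unfolding jac_def using DERIV_imp_deriv[unfolded deriv_def] .

lemma jac_sym_carrier: "jac_sym F N D u \<in> carrier_mat N N"
  by (simp add: jac_sym_def)

lemma jac_sym_symmetric: "\<forall>a<N. \<forall>b<N. jac_sym F N D u $$ (a, b) = jac_sym F N D u $$ (b, a)"
  by (simp add: jac_sym_def add.commute)

lemma skew_diag_eq_0:
  assumes "\<forall>a<N. \<forall>b<N. D $$ (a, b) = - D $$ (b, a)" "a < N"
  shows "D $$ (a, a) = (0 :: real)"
  using assms equal_neg_zero by blast

locale symmetric_flux =
  fixes F dF :: "real \<Rightarrow> real \<Rightarrow> real"
  assumes has_derivative_fst: "\<And>u v. 0 < u \<Longrightarrow> 0 < v \<Longrightarrow> ((\<lambda>t. F t v) has_real_derivative dF u v) (at u)"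
    and commute: "\<And>u v. F u v = F v u"
begin

lemma jac_offdiag:
  assumes "a < N" "b < N" "a \<noteq> b" and u: "\<forall>k<N. 0 < u k"
  shows "jac F N D u a b = -2 * D $$ (a, b) * dF (u b) (u a)"
proof -
  have "residual F N D (u(b := t)) a = -2 * (\<Sum>c<N. D $$ (a, c) * F (u a) (if c = b then t else u c))" for t
    unfolding residual_def using \<open>a \<noteq> b\<close> by (auto intro!: sum.cong)
  moreover have "((\<lambda>t. -2 * (\<Sum>c<N. D $$ (a, c) * F (u a) (if c = b then t else u c)))
      has_real_derivative -2 * (\<Sum>c<N. if c = b then D $$ (a, b) * dF (u b) (u a) else 0)) (at (u b))"
  proof (rule DERIV_cmult, rule DERIV_sum)
    fix c
    have "((\<lambda>t. D $$ (a, b) * F t (u a)) has_real_derivative D $$ (a, b) * dF (u b) (u a)) (at (u b))"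
      using has_derivative_fst u assms by (intro DERIV_cmult) auto
    then show "((\<lambda>t. D $$ (a, c) * F (u a) (if c = b then t else u c)) has_real_derivative
        (if c = b then D $$ (a, b) * dF (u b) (u a) else 0)) (at (u b))"
      by (cases "c = b") (simp_all add: commute[of "u a"])
  qed
  ultimately have "((\<lambda>t. residual F N D (u(b := t)) a) has_real_derivative
      -2 * D $$ (a, b) * dF (u b) (u a)) (at (u b))"
    using \<open>b < N\<close> by (simp add: mult.assoc)
  then show ?thesis
    by (rule jac_eqI)
qed

lemma jac_diag:
  assumes "a < N" and u: "\<forall>k<N. 0 < u k" and "D $$ (a, a) = 0"
  shows "jac F N D u a a = -2 * (\<Sum>c<N. D $$ (a, c) * dF (u a) (u c))"
proof -
  have "residual F N D (u(a := t)) a = -2 * (\<Sum>c<N. D $$ (a, c) * F t (if c = a then t else u c))" for t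
    unfolding residual_def by (auto intro!: sum.cong)
  moreover have "((\<lambda>t. -2 * (\<Sum>c<N. D $$ (a, c) * F t (if c = a then t else u c)))
      has_real_derivative -2 * (\<Sum>c<N. D $$ (a, c) * dF (u a) (u c))) (at (u a))"
  proof (rule DERIV_cmult, rule DERIV_sum)
    fix c assume "c \<in> {..<N}"
    then show "((\<lambda>t. D $$ (a, c) * F t (if c = a then t else u c)) has_real_derivative
        D $$ (a, c) * dF (u a) (u c)) (at (u a))"
      using has_derivative_fst u assms by (cases "c = a") (auto intro!: DERIV_cmult)
  qed
  ultimately have "((\<lambda>t. residual F N D (u(a := t)) a) has_real_derivative
      -2 * (\<Sum>c<N. D $$ (a, c) * dF (u a) (u c))) (at (u a))"
    by simp
  then show ?thesis
    by (rule jac_eqI)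
qed

lemma jac_sym_offdiag:
  assumes skew: "\<forall>a<N. \<forall>b<N. D $$ (a, b) = - D $$ (b, a)"
    and "a < N" "b < N" "a \<noteq> b" and u: "\<forall>k<N. 0 < u k"
  shows "jac_sym F N D u $$ (a, b) = D $$ (a, b) * (dF (u a) (u b) - dF (u b) (u a))"
proof -
  have "D $$ (b, a) = - D $$ (a, b)"
    using skew assms(2,3) by blast
  then show ?thesis
    using assms(2-4) jac_offdiag[OF assms(2-5)] jac_offdiag[where a = b and b = a, OF assms(3,2) _ u]
    by (simp add: jac_sym_def field_simps)
qed

lemma jac_sym_diag:
  assumes skew: "\<forall>a<N. \<forall>b<N. D $$ (a, b) = - D $$ (b, a)"
    and "a < N" and u: "\<forall>k<N. 0 < u k"
  shows "jac_sym F N D u $$ (a, a) = -2 * (\<Sum>c<N. D $$ (a, c) * dF (u a) (u c))"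
  using assms(2) jac_diag[OF assms(2) u skew_diag_eq_0[OF skew]] by (simp add: jac_sym_def)

end

section \<open>Blow-up of the largest eigenvalue\<close>

lemma filterlim_at_top_from_max_0_bound:
  fixes f g :: "'a \<Rightarrow> real"
  assumes "filterlim f at_top F" "eventually (\<lambda>x. f x \<le> c * max 0 (g x)) F" "0 < c"
  shows "filterlim g at_top F"
  unfolding filterlim_at_top_gt[where c = 0]
proof safe
  fix Z :: real assume "0 < Z"
  have "eventually (\<lambda>x. c * Z \<le> f x) F"
    using assms(1) unfolding filterlim_at_top by blast
  with assms(2) show "eventually (\<lambda>x. Z \<le> g x) F"
  proof eventually_elim
    case (elim x)
    then have "c * Z \<le> c * max 0 (g x)" by linarith
    then have "Z \<le> max 0 (g x)"
      using \<open>0 < c\<close> by simp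
    then show ?case
      using \<open>0 < Z\<close> by linarith
  qed
qed

text \<open>The weight \<open>w \<epsilon>\<close> bounds the slope of the flux at the vanishing state \<open>\<epsilon>\<close>; the
  asymmetry of the slopes between a vanishing and a positive state must outgrow it.\<close>

locale singular_flux = symmetric_flux +
  fixes w :: "real \<Rightarrow> real"
  assumes dF_nonneg: "\<And>u v. 0 < u \<Longrightarrow> 0 < v \<Longrightarrow> 0 \<le> dF u v"
    and dF_le_max: "\<And>u v. 0 < u \<Longrightarrow> 0 < v \<Longrightarrow> dF u v \<le> max 1 (v / u)"
    and weight_ge_1: "\<And>e. 0 < e \<Longrightarrow> e \<le> 1 \<Longrightarrow> 1 \<le> w e"
    and dF_le_weight: "\<And>e V. 0 < e \<Longrightarrow> e \<le> 1 \<Longrightarrow> 0 \<le> V \<Longrightarrow> dF e (V + e) \<le> (V + 1) * w e"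
    and slope_gap_outgrows_weight:
      "\<And>V. 0 < V \<Longrightarrow> filterlim (\<lambda>e. (dF e (V + e) - dF (V + e) e)\<^sup>2 / w e) at_top (at_right 0)"
begin

lemma jac_sym_diag_ge:
  assumes skew: "\<forall>a<N. \<forall>b<N. D $$ (a, b) = - D $$ (b, a)"
    and "a < N" and u: "\<forall>k<N. 0 < u k"
  shows "- 2 * (\<Sum>c<N. \<bar>D $$ (a, c)\<bar> * dF (u a) (u c)) \<le> jac_sym F N D u $$ (a, a)"
proof -
  have "(\<Sum>c<N. D $$ (a, c) * dF (u a) (u c)) \<le> (\<Sum>c<N. \<bar>D $$ (a, c)\<bar> * dF (u a) (u c))"
    using u \<open>a < N\<close> dF_nonneg by (intro sum_mono mult_right_mono) auto
  then show ?thesis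
    unfolding jac_sym_diag[OF skew \<open>a < N\<close> u] by simp
qed

lemma jac_sym_diag_ge_at_vanishing_state:
  assumes skew: "\<forall>a<N. \<forall>b<N. D $$ (a, b) = - D $$ (b, a)"
    and U: "\<forall>k<N. 0 \<le> U k" and "i < N" "U i = 0" and e: "0 < e" "e \<le> 1"
  shows "- 2 * (\<Sum>c<N. \<bar>D $$ (i, c)\<bar> * (U c + 1)) * w e \<le> jac_sym F N D (\<lambda>k. U k + e) $$ (i, i)"
proof -
  have "(\<Sum>c<N. \<bar>D $$ (i, c)\<bar> * dF e (U c + e)) \<le> (\<Sum>c<N. \<bar>D $$ (i, c)\<bar> * (U c + 1)) * w e"
    unfolding sum_distrib_right using U e
    by (intro sum_mono) (auto simp: mult.assoc intro!: mult_left_mono dF_le_weight)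
  moreover have "- 2 * (\<Sum>c<N. \<bar>D $$ (i, c)\<bar> * dF e (U c + e)) \<le> jac_sym F N D (\<lambda>k. U k + e) $$ (i, i)"
    using jac_sym_diag_ge[OF skew \<open>i < N\<close>, of "\<lambda>k. U k + e"] U e \<open>U i = 0\<close>
    by (simp add: add_nonneg_pos)
  ultimately show ?thesis
    by linarith
qed

lemma jac_sym_diag_ge_at_positive_state:
  assumes skew: "\<forall>a<N. \<forall>b<N. D $$ (a, b) = - D $$ (b, a)"
    and U: "\<forall>k<N. 0 \<le> U k" and "j < N" "0 < U j" and e: "0 < e" "e \<le> 1"
  shows "- 2 * (\<Sum>c<N. \<bar>D $$ (j, c)\<bar> * max 1 ((U c + 1) / U j))
    \<le> jac_sym F N D (\<lambda>k. U k + e) $$ (j, j)"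
proof -
  have "dF (U j + e) (U c + e) \<le> max 1 ((U c + 1) / U j)" if "c < N" for c
  proof -
    have "(U c + e) / (U j + e) \<le> (U c + 1) / U j"
      using U e \<open>0 < U j\<close> that by (intro frac_le) auto
    then show ?thesis
      using dF_le_max[of "U j + e" "U c + e"] U e \<open>0 < U j\<close> that by auto
  qed
  then have "(\<Sum>c<N. \<bar>D $$ (j, c)\<bar> * dF (U j + e) (U c + e))
      \<le> (\<Sum>c<N. \<bar>D $$ (j, c)\<bar> * max 1 ((U c + 1) / U j))"
    by (intro sum_mono mult_left_mono) auto
  then show ?thesis
    using jac_sym_diag_ge[OF skew \<open>j < N\<close>, of "\<lambda>k. U k + e"] U e by (simp add: add_nonneg_pos)
qed

lemma slope_gap_le_weight:
  assumes "0 < e" "e \<le> 1" "0 \<le> V"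
  shows "\<bar>dF e (V + e) - dF (V + e) e\<bar> \<le> (V + 1) * w e"
proof -
  have "dF (V + e) e \<le> 1"
    using dF_le_max[of "V + e" e] assms by simp
  also have "1 \<le> (V + 1) * w e"
    using mult_mono[of 1 "V + 1" 1 "w e"] weight_ge_1[OF assms(1,2)] assms(3) by simp
  finally show ?thesis
    using dF_le_weight[OF assms] dF_nonneg[of e "V + e"] dF_nonneg[of "V + e" e] assms by auto
qed

lemma lambda_max_jac_sym_ge_slope_gap:
  fixes N :: nat and D :: "real mat" and U :: "nat \<Rightarrow> real" and i j :: nat
  defines "Ca \<equiv> 1 + 2 * (\<Sum>c<N. \<bar>D $$ (i, c)\<bar> * (U c + 1))"
    and "Cb \<equiv> 2 * (\<Sum>c<N. \<bar>D $$ (j, c)\<bar> * max 1 ((U c + 1) / U j))"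
    and "K \<equiv> \<bar>D $$ (i, j)\<bar> * (U j + 1)"
  assumes skew: "\<forall>a<N. \<forall>b<N. D $$ (a, b) = - D $$ (b, a)"
    and U: "\<forall>k<N. U k \<ge> 0"
    and ij: "i < N" "j < N" "i \<noteq> j"
    and Ui: "U i = 0" and Uj: "U j > 0" and e: "0 < e" "e \<le> 1"
  shows "(D $$ (i, j) * (dF e (U j + e) - dF (U j + e) e))\<^sup>2 / (Ca * w e) - Cb
    \<le> (1 + K\<^sup>2) * max 0 (lambda_max (jac_sym F N D (\<lambda>k. U k + e)))"
proof -
  let ?A = "jac_sym F N D (\<lambda>k. U k + e)"
  have "1 \<le> Ca"
    using U by (auto simp: Ca_def intro!: sum_nonneg)
  have "1 \<le> w e"
    using weight_ge_1[OF e] .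
  have Aij: "?A $$ (i, j) = D $$ (i, j) * (dF e (U j + e) - dF (U j + e) e)"
    using jac_sym_offdiag[OF skew ij, of "\<lambda>k. U k + e"] U e Ui by (simp add: add_nonneg_pos)
  have "\<bar>?A $$ (i, j)\<bar> \<le> K * w e"
    using slope_gap_le_weight[OF e, of "U j"] Uj by (simp add: Aij K_def abs_mult mult_left_mono mult.assoc)
  also have "\<dots> \<le> K * (Ca * w e)"
    using \<open>1 \<le> Ca\<close> \<open>1 \<le> w e\<close> by (intro mult_left_mono) (auto simp: K_def Uj less_imp_le)
  finally have "\<bar>?A $$ (i, j)\<bar> \<le> K * (Ca * w e)" .
  moreover have "- (Ca * w e) \<le> ?A $$ (i, i)"
    using jac_sym_diag_ge_at_vanishing_state[OF skew U ij(1) Ui e] \<open>1 \<le> w e\<close>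
    by (simp add: Ca_def algebra_simps)
  moreover have "- Cb \<le> ?A $$ (j, j)"
    using jac_sym_diag_ge_at_positive_state[OF skew U ij(2) Uj e] by (simp add: Cb_def)
  ultimately show ?thesis
    unfolding Aij[symmetric] using \<open>1 \<le> Ca\<close> \<open>1 \<le> w e\<close>
    by (intro lambda_max_ge_pair_bound[OF jac_sym_carrier jac_sym_symmetric ij]) auto
qed

theorem lambda_max_jac_sym_at_top:
  fixes N :: nat and D :: "real mat" and U :: "nat \<Rightarrow> real" and i j :: nat
  assumes skew: "\<forall>a<N. \<forall>b<N. D $$ (a, b) = - D $$ (b, a)"
    and U: "\<forall>k<N. U k \<ge> 0"
    and ij: "i < N" "j < N" "i \<noteq> j"
    and Ui: "U i = 0" and Uj: "U j > 0" and Dij: "D $$ (i, j) \<noteq> 0"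
  shows "filterlim (\<lambda>e. lambda_max (jac_sym F N D (\<lambda>k. U k + e))) at_top (at_right 0)"
proof -
  define Ca where "Ca = 1 + 2 * (\<Sum>c<N. \<bar>D $$ (i, c)\<bar> * (U c + 1))"
  define Cb where "Cb = 2 * (\<Sum>c<N. \<bar>D $$ (j, c)\<bar> * max 1 ((U c + 1) / U j))"
  define K where "K = \<bar>D $$ (i, j)\<bar> * (U j + 1)"
  define h where "h e = (D $$ (i, j))\<^sup>2 / Ca * ((dF e (U j + e) - dF (U j + e) e)\<^sup>2 / w e) - Cb" for e
  have "0 < Ca"
    using U by (auto simp: Ca_def intro!: sum_nonneg add_pos_nonneg)
  then have "0 < (D $$ (i, j))\<^sup>2 / Ca"
    using Dij by simp
  then have "filterlim (\<lambda>e. - Cb + (D $$ (i, j))\<^sup>2 / Ca * ((dF e (U j + e) - dF (U j + e) e)\<^sup>2 / w e))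
      at_top (at_right 0)"
    by (intro filterlim_tendsto_add_at_top[OF tendsto_const]
        filterlim_tendsto_pos_mult_at_top[OF tendsto_const _ slope_gap_outgrows_weight[OF Uj]])
  then have "filterlim h at_top (at_right 0)"
    by (simp add: h_def[abs_def])
  moreover have "eventually (\<lambda>e. h e \<le> (1 + K\<^sup>2) * max 0 (lambda_max (jac_sym F N D (\<lambda>k. U k + e))))
      (at_right 0)"
    using eventually_at_right_real[of 0 1, simplified]
  proof (rule eventually_mono)
    fix e :: real assume "0 < e \<and> e < 1"
    then show "h e \<le> (1 + K\<^sup>2) * max 0 (lambda_max (jac_sym F N D (\<lambda>k. U k + e)))"
      using lambda_max_jac_sym_ge_slope_gap[OF skew U ij Ui Uj, of e, folded Ca_def Cb_def K_def]
      by (simp add: h_def power_mult_distrib)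
  qed
  ultimately show ?thesis
    by (rule filterlim_at_top_from_max_0_bound) (simp add: add_pos_nonneg)
qed

end

section \<open>The logarithmic and the geometric flux\<close>

lemma slope_gap_at_top_by_scaling:
  fixes dF :: "real \<Rightarrow> real \<Rightarrow> real" and w :: "real \<Rightarrow> real"
  assumes "0 < V" "0 < w V"
    and hom: "\<And>t a b. 0 < t \<Longrightarrow> 0 < a \<Longrightarrow> 0 < b \<Longrightarrow> dF (t * a) (t * b) = dF a b"
    and w_mult: "\<And>d. 0 < d \<Longrightarrow> w (V * d) = w V * w d"
    and lim: "filterlim (\<lambda>d. (dF d (1 + d) - dF (1 + d) d)\<^sup>2 / w d) at_top (at_right 0)"
  shows "filterlim (\<lambda>e. (dF e (V + e) - dF (V + e) e)\<^sup>2 / w e) at_top (at_right 0)"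
proof -
  let ?G = "\<lambda>d. (dF d (1 + d) - dF (1 + d) d)\<^sup>2 / w d"
  have "filterlim (\<lambda>e. inverse V * e) (at_right 0) (at_right 0)"
    using \<open>0 < V\<close> by (intro filterlim_times_pos[OF filterlim_ident]) auto
  then have "filterlim (\<lambda>e. 1 / w V * ?G (inverse V * e)) at_top (at_right 0)"
    using \<open>0 < w V\<close>
    by (intro filterlim_tendsto_pos_mult_at_top[OF tendsto_const] filterlim_compose[OF lim]) auto
  moreover have "eventually (\<lambda>e. 1 / w V * ?G (inverse V * e) = (dF e (V + e) - dF (V + e) e)\<^sup>2 / w e)
      (at_right 0)"
  proof (rule eventually_mono[OF eventually_at_right_less])
    fix e :: real assume "0 < e"
    define d where "d = inverse V * e"
    have "0 < d" and e: "e = V * d" "V + e = V * (1 + d)"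
      using \<open>0 < V\<close> \<open>0 < e\<close> by (simp_all add: d_def field_simps)
    then have "dF e (V + e) = dF d (1 + d)" "dF (V + e) e = dF (1 + d) d" "w e = w V * w d"
      using hom[of V d "1 + d"] hom[of V "1 + d" d] w_mult[of d] \<open>0 < V\<close> by (simp_all only: e)
    then show "1 / w V * ?G (inverse V * e) = (dF e (V + e) - dF (V + e) e)\<^sup>2 / w e"
      by (simp add: d_def[symmetric])
  qed
  ultimately show ?thesis
    by (rule filterlim_cong[OF refl refl, THEN iffD1, rotated])
qed

lemma exp_minus_one_minus_le: "exp x - 1 - x \<le> max 1 (exp x) * (x :: real)\<^sup>2"
proof -
  have "exp x * (1 - x) \<le> exp x * exp (- x)"
    using exp_ge_add_one_self[of "- x"] by (intro mult_left_mono) auto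
  then have key: "exp x * (1 - x) \<le> 1"
    by (simp add: exp_minus)
  show ?thesis
  proof (cases "- 1 \<le> x")
    case True
    then have "exp x * (1 - x) * (1 + x) \<le> 1 + x"
      using mult_right_mono[OF key, of "1 + x"] by simp
    then have "exp x - 1 - x \<le> exp x * x\<^sup>2"
      by (simp add: power2_eq_square algebra_simps)
    moreover have "exp x * x\<^sup>2 \<le> max 1 (exp x) * x\<^sup>2"
      by (simp add: mult_right_mono)
    ultimately show ?thesis
      by linarith
  next
    case False
    then have "exp x \<le> 1" "- x \<le> x\<^sup>2"
      using mult_left_mono[of 1 "- x" "- x"] by (simp_all add: power2_eq_square)
    moreover have "x\<^sup>2 \<le> max 1 (exp x) * x\<^sup>2"
      using mult_right_mono[of 1 "max 1 (exp x)" "x\<^sup>2"] by simp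
    ultimately show ?thesis
      by linarith
  qed
qed

lemma sqrt_le_max_1: "0 \<le> x \<Longrightarrow> sqrt x \<le> max 1 x"
proof -
  assume "0 \<le> x"
  have "x \<le> max 1 x * 1"
    by simp
  also have "\<dots> \<le> (max 1 x)\<^sup>2"
    unfolding power2_eq_square by (intro mult_left_mono) auto
  finally show ?thesis
    using real_sqrt_le_mono[of x "(max 1 x)\<^sup>2"] by simp
qed

definition log_flux_d1 :: "real \<Rightarrow> real \<Rightarrow> real" where
  "log_flux_d1 u v = (let r = v / u in if r = 1 then 1 / 2 else (r - 1 - ln r) / (ln r)\<^sup>2)"

lemma log_flux_commute: "log_flux u v = log_flux v u"
proof -
  have "(v - u) / (ln v - ln u) = (u - v) / (ln u - ln v)"
    by (metis minus_diff_eq minus_divide_divide)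
  then show ?thesis
    by (simp add: log_flux_def)
qed

lemma log_flux_at_1_has_derivative: "((\<lambda>s. log_flux s 1) has_real_derivative 1 / 2) (at 1)"
proof -
  have lim: "((\<lambda>s :: real. ((s - 1) / ln s - 1) / (s - 1)) \<longlongrightarrow> 1 / 2) (at 1)"
    by real_asymp
  have ev: "eventually (\<lambda>s. ((s - 1) / ln s - 1) / (s - 1) = (log_flux s 1 - log_flux 1 1) / (s - 1))
      (at (1 :: real))"
  proof -
    have "log_flux s 1 = (s - 1) / ln s" if "s \<noteq> 1" for s
      using log_flux_commute[of s 1] that by (simp add: log_flux_def)
    then show ?thesis
      by (auto simp: eventually_at_filter log_flux_def[of 1 1])
  qed
  show ?thesis
    unfolding has_field_derivative_iff using tendsto_cong[OF ev] lim by simp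
qed

lemma log_flux_eq_scaled: "0 < t \<Longrightarrow> 0 < v \<Longrightarrow> log_flux t v = v * log_flux (t / v) 1"
  by (cases "t = v") (simp_all add: log_flux_def ln_div field_simps)

lemma log_flux_has_derivative_fst:
  assumes "0 < u" "0 < v"
  shows "((\<lambda>t. log_flux t v) has_real_derivative log_flux_d1 u v) (at u)"
proof (cases "u = v")
  case True
  have "((\<lambda>t. v * log_flux (t / v) 1) has_real_derivative v * (1 / 2 * (1 / v))) (at u)"
    using log_flux_at_1_has_derivative True \<open>0 < v\<close>
    by (intro DERIV_cmult DERIV_chain2[where f = "\<lambda>s. log_flux s 1"]) (auto intro!: derivative_eq_intros)
  then have "((\<lambda>t. v * log_flux (t / v) 1) has_real_derivative log_flux_d1 u v) (at u)"
    using True \<open>0 < v\<close> by (simp add: log_flux_d1_def)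
  then show ?thesis
    by (rule has_field_derivative_transform_within_open[where S = "{0<..}"])
       (use assms log_flux_eq_scaled[symmetric] in auto)
next
  case False
  have "ln v - ln u \<noteq> 0"
    using False assms by simp
  then have "((\<lambda>t. (v - t) / (ln v - ln t)) has_real_derivative
      (- (ln v - ln u) + (v - u) / u) / (ln v - ln u)\<^sup>2) (at u)"
    using assms by (auto intro!: derivative_eq_intros simp: power2_eq_square field_simps)
  also have "(- (ln v - ln u) + (v - u) / u) / (ln v - ln u)\<^sup>2 = log_flux_d1 u v"
  proof -
    have "ln (v / u) = ln v - ln u" "v / u - 1 = (v - u) / u"
      using assms by (simp_all add: ln_div diff_divide_distrib)
    then show ?thesis
      using False assms by (simp add: log_flux_d1_def)
  qed
  finally show ?thesis
    by (rule has_field_derivative_transform_within_open[where S = "{0<..} - {v}"])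
       (use assms False in \<open>auto simp: log_flux_def\<close>)
qed

lemma log_flux_d1_nonneg: "0 < u \<Longrightarrow> 0 < v \<Longrightarrow> 0 \<le> log_flux_d1 u v"
  using ln_le_minus_one[of "v / u"] by (auto simp: log_flux_d1_def Let_def intro!: divide_nonneg_nonneg)

lemma log_flux_d1_le_max:
  assumes "0 < u" "0 < v"
  shows "log_flux_d1 u v \<le> max 1 (v / u)"
proof -
  define r where "r = v / u"
  have "0 < r"
    using assms by (simp add: r_def)
  show ?thesis
  proof (cases "r = 1")
    case False
    then have "0 < (ln r)\<^sup>2"
      using \<open>0 < r\<close> by simp
    moreover have "r - 1 - ln r \<le> max 1 r * (ln r)\<^sup>2"
      using exp_minus_one_minus_le[of "ln r"] \<open>0 < r\<close> by simp
    ultimately show ?thesis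
      using False by (simp add: log_flux_d1_def r_def[symmetric] pos_divide_le_eq)
  qed (simp add: log_flux_d1_def r_def[symmetric])
qed

lemma log_flux_d1_homogeneous: "0 < t \<Longrightarrow> log_flux_d1 (t * a) (t * b) = log_flux_d1 a b"
  by (simp add: log_flux_d1_def)

lemma log_flux_slope_gap_at_top:
  assumes "0 < V"
  shows "filterlim (\<lambda>e. (log_flux_d1 e (V + e) - log_flux_d1 (V + e) e)\<^sup>2 / (1 / e)) at_top (at_right 0)"
proof (rule slope_gap_at_top_by_scaling)
  show "filterlim (\<lambda>d. (log_flux_d1 d (1 + d) - log_flux_d1 (1 + d) d)\<^sup>2 / (1 / d)) at_top (at_right 0)"
    by (simp add: log_flux_d1_def Let_def) real_asymp
qed (use assms in \<open>simp_all add: log_flux_d1_homogeneous\<close>)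

lemma log_flux_d1_le_weight:
  assumes "0 < e" "e \<le> 1" "0 \<le> V"
  shows "log_flux_d1 e (V + e) \<le> (V + 1) * (1 / e)"
proof -
  have "log_flux_d1 e (V + e) \<le> max 1 ((V + e) / e)"
    using assms by (intro log_flux_d1_le_max) auto
  also have "\<dots> \<le> (V + 1) / e"
    using assms by (intro max.boundedI) (simp_all add: le_divide_eq divide_right_mono)
  finally show ?thesis
    by simp
qed

interpretation log: singular_flux log_flux log_flux_d1 "\<lambda>e. 1 / e"
proof unfold_locales
  show "\<And>u v. log_flux u v = log_flux v u"
    by (rule log_flux_commute)
  show "\<And>e V. 0 < e \<Longrightarrow> e \<le> 1 \<Longrightarrow> 0 \<le> V \<Longrightarrow> log_flux_d1 e (V + e) \<le> (V + 1) * (1 / e)"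
    by (rule log_flux_d1_le_weight)
  show "\<And>V. 0 < V \<Longrightarrow> filterlim (\<lambda>e. (log_flux_d1 e (V + e) - log_flux_d1 (V + e) e)\<^sup>2 / (1 / e))
      at_top (at_right 0)"
    by (rule log_flux_slope_gap_at_top)
qed (simp_all add: log_flux_has_derivative_fst log_flux_d1_nonneg log_flux_d1_le_max)

definition geo_flux_d1 :: "real \<Rightarrow> real \<Rightarrow> real" where
  "geo_flux_d1 u v = sqrt (v / u) / 2"

lemma geo_flux_has_derivative_fst:
  assumes "0 < u" "0 < v"
  shows "((\<lambda>t. geo_flux t v) has_real_derivative geo_flux_d1 u v) (at u)"
proof -
  have "((\<lambda>t. t * v) has_real_derivative v) (at u)"
    by (auto intro!: derivative_eq_intros)
  from DERIV_chain2[OF DERIV_real_sqrt[OF mult_pos_pos[OF assms]] this]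
  have "((\<lambda>t. sqrt (t * v)) has_real_derivative inverse (sqrt (u * v)) / 2 * v) (at u)" .
  also have "inverse (sqrt (u * v)) / 2 * v = geo_flux_d1 u v"
  proof -
    have "v = sqrt v * sqrt v"
      using assms by simp
    then show ?thesis
      using assms by (simp add: geo_flux_d1_def real_sqrt_mult real_sqrt_divide field_simps)
  qed
  finally show ?thesis
    by (simp add: geo_flux_def)
qed

lemma geo_flux_commute: "geo_flux u v = geo_flux v u"
  by (simp add: geo_flux_def mult.commute)

lemma geo_flux_d1_nonneg: "0 < u \<Longrightarrow> 0 < v \<Longrightarrow> 0 \<le> geo_flux_d1 u v"
  by (simp add: geo_flux_d1_def)

lemma geo_flux_d1_le_max:
  assumes "0 < u" "0 < v"
  shows "geo_flux_d1 u v \<le> max 1 (v / u)"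
proof -
  have "sqrt (v / u) \<le> max 1 (v / u)" "0 \<le> sqrt (v / u)"
    using assms by (simp_all add: sqrt_le_max_1)
  then show ?thesis
    unfolding geo_flux_d1_def by linarith
qed

lemma geo_flux_slope_gap_at_top:
  assumes "0 < V"
  shows "filterlim (\<lambda>e. (geo_flux_d1 e (V + e) - geo_flux_d1 (V + e) e)\<^sup>2 / (1 / sqrt e))
    at_top (at_right 0)"
proof (rule slope_gap_at_top_by_scaling)
  show "filterlim (\<lambda>d. (geo_flux_d1 d (1 + d) - geo_flux_d1 (1 + d) d)\<^sup>2 / (1 / sqrt d))
      at_top (at_right 0)"
    unfolding geo_flux_d1_def by real_asymp
qed (use assms in \<open>simp_all add: geo_flux_d1_def real_sqrt_mult\<close>)

lemma geo_flux_d1_le_weight: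
  assumes "0 < e" "e \<le> 1" "0 \<le> V"
  shows "geo_flux_d1 e (V + e) \<le> (V + 1) * (1 / sqrt e)"
proof -
  have "sqrt (V + e) \<le> V + 1"
    using sqrt_le_max_1[of "V + e"] assms by simp
  then have "sqrt (V + e) / sqrt e \<le> (V + 1) / sqrt e"
    using assms by (simp add: divide_right_mono)
  moreover have "geo_flux_d1 e (V + e) = sqrt (V + e) / sqrt e / 2" "0 \<le> sqrt (V + e) / sqrt e"
    using assms by (simp_all add: geo_flux_d1_def real_sqrt_divide)
  ultimately show ?thesis
    by simp
qed

interpretation geo: singular_flux geo_flux geo_flux_d1 "\<lambda>e. 1 / sqrt e"
proof unfold_locales
  show "\<And>u v. geo_flux u v = geo_flux v u"
    by (rule geo_flux_commute)
  show "\<And>e V. 0 < e \<Longrightarrow> e \<le> 1 \<Longrightarrow> 0 \<le> V \<Longrightarrow> geo_flux_d1 e (V + e) \<le> (V + 1) * (1 / sqrt e)"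
    by (rule geo_flux_d1_le_weight)
  show "\<And>V. 0 < V \<Longrightarrow> filterlim (\<lambda>e. (geo_flux_d1 e (V + e) - geo_flux_d1 (V + e) e)\<^sup>2 / (1 / sqrt e))
      at_top (at_right 0)"
    by (rule geo_flux_slope_gap_at_top)
qed (simp_all add: geo_flux_has_derivative_fst geo_flux_d1_nonneg geo_flux_d1_le_max)

theorem mainTheorem11:
  fixes N :: nat and D :: "real mat" and U :: "nat \<Rightarrow> real"
    and F :: "real \<Rightarrow> real \<Rightarrow> real" and i j :: nat
  assumes D_dim: "D \<in> carrier_mat N N"
    and D_skew: "\<forall>a<N. \<forall>b<N. D $$ (a, b) = - D $$ (b, a)"
    and U_nonneg: "\<forall>k<N. U k \<ge> 0"
    and ij: "i < N" "j < N" "i \<noteq> j"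
    and Ui: "U i = 0" and Uj: "U j > 0" and Dij: "D $$ (i, j) \<noteq> 0"
    and F_choice: "F = log_flux \<or> F = geo_flux"
  shows "filterlim (\<lambda>\<epsilon>. lambda_max (jac_sym F N D (\<lambda>k. U k + \<epsilon>)))
           at_top (at_right 0)"
  using F_choice log.lambda_max_jac_sym_at_top[OF D_skew U_nonneg ij Ui Uj Dij]
    geo.lambda_max_jac_sym_at_top[OF D_skew U_nonneg ij Ui Uj Dij]
  by auto

end
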